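(* Let $\gamma\in(1,3)$ and $\mu\in(0,1)$, and let $D=(U_D,H_D)=\big(\frac{2}{3-\gamma},(\frac{\gamma-1}{3-\gamma})^2\big)$. Among the integral curves of $\frac{dH}{dU}=\frac{F(H,U)}{G(H,U)}$ passing through $D$, there is exactly one with $\frac{dH}{dU}\big|_{U=U_D}=C_1:=\frac{(\gamma-1)^2}{3-\gamma}$, namely the special solution $H(U)=\frac{(\gamma-1)^2}{4}U^2$. All other integral curves passing through $D$ satisfy $\frac{dH}{dU}\big|_{U=U_D}=C_2$, where \[ C_2:=\frac{(\gamma-1)\big[-(\gamma-3)^2\mu+\gamma^2-2\gamma+5\big]}{2(3-\gamma)[(\gamma-3)\mu+2]}. \]
   Context: $k_1=\frac{(\gamma+1)+\mu(3-\gamma)}{2}$, $k_2=\frac{2(1-\mu)}{\gamma-1}$, $F(H,U)=2H[H-(U^2-k_1U+\mu)]$, $G(H,U)=H(U+k_2)-U(U-1)(U-\mu)$. An integral curve passing through $D$ is a trajectory of the planar system $\frac{dH}{ds}=F(H,U)$, $\frac{dU}{ds}=G(H,U)$ converging to $D$ (the point $D$ is an equilibrium, with $F=G=0$ and $(U_D-1)^2-H_D=0$). *)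

theory Defs
  imports "HOL-Analysis.Analysis"
begin

definition k1 :: "real \<Rightarrow> real \<Rightarrow> real" where
  "k1 \<gamma> \<mu> = ((\<gamma> + 1) + \<mu> * (3 - \<gamma>)) / 2"

definition k2 :: "real \<Rightarrow> real \<Rightarrow> real" where
  "k2 \<gamma> \<mu> = 2 * (1 - \<mu>) / (\<gamma> - 1)"

definition Ffun :: "real \<Rightarrow> real \<Rightarrow> real \<Rightarrow> real \<Rightarrow> real" where
  "Ffun \<gamma> \<mu> H U = 2 * H * (H - (U^2 - k1 \<gamma> \<mu> * U + \<mu>))"

definition Gfun :: "real \<Rightarrow> real \<Rightarrow> real \<Rightarrow> real \<Rightarrow> real" where
  "Gfun \<gamma> \<mu> H U = H * (U + k2 \<gamma> \<mu>) - U * (U - 1) * (U - \<mu>)"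

definition U_D :: "real \<Rightarrow> real" where
  "U_D \<gamma> = 2 / (3 - \<gamma>)"

definition H_D :: "real \<Rightarrow> real" where
  "H_D \<gamma> = ((\<gamma> - 1) / (3 - \<gamma>))^2"

definition C1 :: "real \<Rightarrow> real" where
  "C1 \<gamma> = (\<gamma> - 1)^2 / (3 - \<gamma>)"

definition C2 :: "real \<Rightarrow> real \<Rightarrow> real" where
  "C2 \<gamma> \<mu> = (\<gamma> - 1) * (- ((\<gamma> - 3)^2 * \<mu>) + \<gamma>^2 - 2 * \<gamma> + 5)
                 / (2 * (3 - \<gamma>) * ((\<gamma> - 3) * \<mu> + 2))"

text \<open>A (non-stationary) trajectory of dH/ds = F, dU/ds = G converging to D as the
  parameter tends along the filter L (L = at_top: s \<rightarrow> +\<infinity>; L = at_bot: s \<rightarrow> -\<infinity>).\<close>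
definition integral_curve_to_D ::
  "real \<Rightarrow> real \<Rightarrow> (real \<Rightarrow> real) \<Rightarrow> (real \<Rightarrow> real) \<Rightarrow> real filter \<Rightarrow> bool" where
  "integral_curve_to_D \<gamma> \<mu> H U L \<longleftrightarrow>
     (\<forall>\<^sub>F s in L. (H has_real_derivative Ffun \<gamma> \<mu> (H s) (U s)) (at s)
                 \<and> (U has_real_derivative Gfun \<gamma> \<mu> (H s) (U s)) (at s)
                 \<and> (H s, U s) \<noteq> (H_D \<gamma>, U_D \<gamma>))
     \<and> (H \<longlongrightarrow> H_D \<gamma>) L \<and> (U \<longlongrightarrow> U_D \<gamma>) L"

definition slope_at_D ::
  "real \<Rightarrow> (real \<Rightarrow> real) \<Rightarrow> (real \<Rightarrow> real) \<Rightarrow> real filter \<Rightarrow> real \<Rightarrow> bool" where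
  "slope_at_D \<gamma> H U L c \<longleftrightarrow>
     ((\<lambda>s. (H s - H_D \<gamma>) / (U s - U_D \<gamma>)) \<longlongrightarrow> c) L"

definition on_special_solution ::
  "real \<Rightarrow> (real \<Rightarrow> real) \<Rightarrow> (real \<Rightarrow> real) \<Rightarrow> real filter \<Rightarrow> bool" where
  "on_special_solution \<gamma> H U L \<longleftrightarrow> (\<forall>\<^sub>F s in L. H s = (\<gamma> - 1)^2 / 4 * (U s)^2)"

end

theory Submission
  imports Defs "HOL-Real_Asymp.Real_Asymp"
begin

(* In the coordinates w = H - (gamma-1)^2/4 U^2 and u = U - U_D the system is triangular,
   w' = w A(w,U) and u' = w B(U) + u P(U), and at D the rates satisfy P(U_D) < A(0,U_D) < 0:
   D is a stable node.  Hence no non-stationary curve tends to D as s -> -infinity, since w and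
   then u would have to vanish identically.  As s -> +infinity either w vanishes from some time
   on, so the curve lies on the special solution H = (gamma-1)^2/4 U^2 and has slope
   (gamma-1)^2/2 U_D = C1; or w never vanishes, and r = u/w obeys the affine equation
   r' = (P - A) r + B with rate tending to P(U_D) - A(0,U_D) < 0, so r tends to
   B(U_D)/(A(0,U_D) - P(U_D)) and the slope w/u + (gamma-1)^2/4 (U + U_D) tends to C2.
   The special solution does reach D: on it U' = P(U) (U - U_D), which is solved by inverting
   the explicit time function of this scalar equation. *)

section \<open>Scalar linear differential inequalities\<close>

lemma square_antimono_of_DERIV_mult_nonpos:
  fixes f A :: "real \<Rightarrow> real"
  assumes "\<And>s. a \<le> s \<Longrightarrow> s \<le> b \<Longrightarrow> (f has_real_derivative f s * A s) (at s)"
    and "\<And>s. a \<le> s \<Longrightarrow> s \<le> b \<Longrightarrow> A s \<le> 0"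
    and "a \<le> b"
  shows "(f b)^2 \<le> (f a)^2"
proof (rule DERIV_nonpos_imp_nonincreasing[where f = "\<lambda>s. (f s)^2", OF \<open>a \<le> b\<close>])
  fix x assume x: "a \<le> x" "x \<le> b"
  have "((\<lambda>s. (f s)^2) has_real_derivative 2 * (f x)^2 * A x) (at x)"
    using assms(1)[OF x] by (auto intro!: derivative_eq_intros simp: power2_eq_square)
  moreover have "2 * (f x)^2 * A x \<le> 0"
    using assms(2)[OF x] by (simp add: mult_nonneg_nonpos)
  ultimately show "\<exists>y. ((\<lambda>s. (f s)^2) has_real_derivative y) (at x) \<and> y \<le> 0" by blast
qed

lemma zero_if_DERIV_mult_nonpos_tendsto_zero_at_bot:
  fixes f A :: "real \<Rightarrow> real"
  assumes "\<And>s. s \<le> s0 \<Longrightarrow> (f has_real_derivative f s * A s) (at s)"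
    and "\<And>s. s \<le> s0 \<Longrightarrow> A s \<le> 0"
    and "(f \<longlongrightarrow> 0) at_bot" and "t \<le> s0"
  shows "f t = 0"
proof -
  have "((\<lambda>s. (f s)^2) \<longlongrightarrow> 0) at_bot"
    using tendsto_power[OF assms(3), of 2] by simp
  moreover have "\<forall>\<^sub>F s in at_bot. (f t)^2 \<le> (f s)^2"
    by (rule eventually_at_bot_linorderI[of t],
        rule square_antimono_of_DERIV_mult_nonpos[where f = f and A = A])
      (use assms in auto)
  ultimately have "(f t)^2 \<le> 0" by (intro tendsto_lowerbound) auto
  then show ?thesis by simp
qed

lemma eventually_zero_or_nonzero_of_DERIV_mult_nonpos:
  fixes f A :: "real \<Rightarrow> real"
  assumes "\<forall>\<^sub>F s in at_top. (f has_real_derivative f s * A s) (at s) \<and> A s \<le> 0"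
  shows "(\<forall>\<^sub>F s in at_top. f s = 0) \<or> (\<forall>\<^sub>F s in at_top. f s \<noteq> 0)"
proof -
  obtain s0 where s0: "\<And>s. s0 \<le> s \<Longrightarrow> (f has_real_derivative f s * A s) (at s) \<and> A s \<le> 0"
    using assms by (auto simp: eventually_at_top_linorder)
  show ?thesis
  proof (cases "\<exists>s1\<ge>s0. f s1 = 0")
    case True
    then obtain s1 where s1: "s0 \<le> s1" "f s1 = 0" by blast
    have "f s = 0" if "s1 \<le> s" for s
      using square_antimono_of_DERIV_mult_nonpos[of s1 s f A] s0 s1 that by fastforce
    then show ?thesis by (auto intro: eventually_at_top_linorderI)
  next
    case False
    then show ?thesis by (auto intro!: eventually_at_top_linorderI[of s0])
  qed
qed

lemma eventually_le_of_DERIV_le_affine: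
  fixes V V' :: "real \<Rightarrow> real"
  assumes "0 < k" "0 < K"
    and "\<And>s. s0 \<le> s \<Longrightarrow> (V has_real_derivative V' s) (at s)"
    and "\<And>s. s0 \<le> s \<Longrightarrow> V' s \<le> K - k * V s"
  shows "\<forall>\<^sub>F s in at_top. V s \<le> 2 * K / k"
proof -
  define Y where "Y s = (V s - K / k) * exp (k * s)" for s
  have Y_antimono: "Y s \<le> Y s0" if "s0 \<le> s" for s
  proof (rule DERIV_nonpos_imp_nonincreasing[OF that])
    fix x assume x: "s0 \<le> x" "x \<le> s"
    have "(Y has_real_derivative (V' x + k * V x - K) * exp (k * x)) (at x)"
      unfolding Y_def using assms(1,3) x
      by (auto intro!: derivative_eq_intros simp: field_simps)
    moreover have "(V' x + k * V x - K) * exp (k * x) \<le> 0"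
      using assms(4)[of x] x by (intro mult_nonpos_nonneg) auto
    ultimately show "\<exists>y. (Y has_real_derivative y) (at x) \<and> y \<le> 0" by blast
  qed
  have "((\<lambda>s. (V s0 - K / k) * exp (k * (s0 - s))) \<longlongrightarrow> 0) at_top"
    using assms(1) by real_asymp
  then have "\<forall>\<^sub>F s in at_top. (V s0 - K / k) * exp (k * (s0 - s)) < K / k"
    using assms(1,2) by (intro order_tendstoD(2)) auto
  with eventually_ge_at_top[of s0] show ?thesis
  proof eventually_elim
    case (elim s)
    have "(V s - K / k) * exp (k * s) \<le> (V s0 - K / k) * exp (k * s0)"
      using Y_antimono[of s] elim unfolding Y_def by simp
    then have "V s - K / k \<le> (V s0 - K / k) * exp (k * (s0 - s))"
      by (simp add: field_simps right_diff_distrib exp_diff)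
    with elim show ?case by simp
  qed
qed

lemma tendsto_zero_of_DERIV_stable_affine:
  fixes \<rho> \<beta> \<delta> :: "real \<Rightarrow> real"
  assumes "0 < m"
    and "\<forall>\<^sub>F s in at_top. (\<rho> has_real_derivative \<beta> s * \<rho> s + \<delta> s) (at s) \<and> \<beta> s \<le> - m"
    and "(\<delta> \<longlongrightarrow> 0) at_top"
  shows "(\<rho> \<longlongrightarrow> 0) at_top"
proof (rule tendstoI)
  fix e :: real assume "0 < e"
  define \<eta> where "\<eta> = e * m / 2"
  have "0 < \<eta>" using \<open>0 < e\<close> \<open>0 < m\<close> by (simp add: \<eta>_def)
  have "\<forall>\<^sub>F s in at_top. \<bar>\<delta> s\<bar> < \<eta>"
    using tendstoD[OF assms(3) \<open>0 < \<eta>\<close>] by simp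
  with assms(2) have "\<forall>\<^sub>F s in at_top. (\<rho> has_real_derivative \<beta> s * \<rho> s + \<delta> s) (at s)
      \<and> \<beta> s \<le> - m \<and> \<bar>\<delta> s\<bar> < \<eta>"
    by eventually_elim blast
  then obtain s0 where s0: "\<And>s. s0 \<le> s \<Longrightarrow> (\<rho> has_real_derivative \<beta> s * \<rho> s + \<delta> s) (at s)
      \<and> \<beta> s \<le> - m \<and> \<bar>\<delta> s\<bar> < \<eta>"
    by (auto simp: eventually_at_top_linorder)
  have "\<forall>\<^sub>F s in at_top. (\<rho> s)^2 \<le> 2 * (\<eta>^2 / m) / m"
  proof (rule eventually_le_of_DERIV_le_affine[where V' = "\<lambda>s. 2 * \<rho> s * (\<beta> s * \<rho> s + \<delta> s)"])
    show "0 < m" "0 < \<eta>^2 / m" using \<open>0 < m\<close> \<open>0 < \<eta>\<close> by auto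
    fix s assume "s0 \<le> s"
    note s = s0[OF this]
    then show "((\<lambda>s. (\<rho> s)^2) has_real_derivative 2 * \<rho> s * (\<beta> s * \<rho> s + \<delta> s)) (at s)"
      by (auto intro!: derivative_eq_intros)
    have am_gm: "2 * (\<bar>\<rho> s\<bar> * \<eta>) \<le> m * (\<rho> s)^2 + \<eta>^2 / m"
    proof -
      have "0 \<le> (m * \<bar>\<rho> s\<bar> - \<eta>)^2" by simp
      then show ?thesis using \<open>0 < m\<close> by (simp add: field_simps power2_eq_square)
    qed
    have "2 * \<rho> s * (\<beta> s * \<rho> s + \<delta> s) = 2 * \<beta> s * (\<rho> s)^2 + 2 * (\<rho> s * \<delta> s)"
      by (simp add: algebra_simps power2_eq_square)
    also have "\<dots> \<le> 2 * (- m) * (\<rho> s)^2 + 2 * (\<bar>\<rho> s\<bar> * \<eta>)"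
    proof -
      have "\<rho> s * \<delta> s \<le> \<bar>\<rho> s\<bar> * \<eta>"
        using s abs_ge_self[of "\<rho> s * \<delta> s"] mult_left_mono[of "\<bar>\<delta> s\<bar>" \<eta> "\<bar>\<rho> s\<bar>"]
        by (simp add: abs_mult)
      moreover have "\<beta> s * (\<rho> s)^2 \<le> (- m) * (\<rho> s)^2"
        using s by (intro mult_right_mono) auto
      ultimately show ?thesis by simp
    qed
    also have "\<dots> \<le> \<eta>^2 / m - m * (\<rho> s)^2" using am_gm by simp
    finally show "2 * \<rho> s * (\<beta> s * \<rho> s + \<delta> s) \<le> \<eta>^2 / m - m * (\<rho> s)^2" .
  qed
  moreover have "2 * (\<eta>^2 / m) / m < e^2"
    using \<open>0 < m\<close> \<open>0 < e\<close> by (simp add: \<eta>_def power2_eq_square field_simps)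
  ultimately have "\<forall>\<^sub>F s in at_top. \<bar>\<rho> s\<bar>^2 < e^2" by (auto elim: eventually_mono)
  then show "\<forall>\<^sub>F s in at_top. dist (\<rho> s) 0 < e"
  proof eventually_elim
    case (elim s)
    then show ?case using power2_less_imp_less[of "\<bar>\<rho> s\<bar>" e] \<open>0 < e\<close> by simp
  qed
qed

section \<open>Triangular linear systems\<close>

lemma triangular_system_zero_if_tendsto_zero_at_bot:
  fixes w u A B P :: "real \<Rightarrow> real"
  assumes "\<forall>\<^sub>F s in at_bot. (w has_real_derivative w s * A s) (at s)
              \<and> (u has_real_derivative w s * B s + u s * P s) (at s) \<and> A s \<le> 0 \<and> P s \<le> 0"
    and "(w \<longlongrightarrow> 0) at_bot" and "(u \<longlongrightarrow> 0) at_bot"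
  shows "\<forall>\<^sub>F s in at_bot. w s = 0 \<and> u s = 0"
proof -
  obtain s0 where s0: "\<And>s. s \<le> s0 \<Longrightarrow> (w has_real_derivative w s * A s) (at s)
              \<and> (u has_real_derivative w s * B s + u s * P s) (at s) \<and> A s \<le> 0 \<and> P s \<le> 0"
    using assms(1) by (auto simp: eventually_at_bot_linorder)
  have w0: "w s = 0" if "s \<le> s0" for s
    by (rule zero_if_DERIV_mult_nonpos_tendsto_zero_at_bot[OF _ _ assms(2) that]) (use s0 in auto)
  have "u s = 0" if "s \<le> s0" for s
    by (rule zero_if_DERIV_mult_nonpos_tendsto_zero_at_bot[OF _ _ assms(3) that]) (use s0 w0 in auto)
  with w0 show ?thesis by (auto intro: eventually_at_bot_linorderI[of s0])
qed

lemma ratio_tendsto_of_triangular_system: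
  fixes w u A B P :: "real \<Rightarrow> real"
  assumes deriv: "\<forall>\<^sub>F s in at_top. (w has_real_derivative w s * A s) (at s)
              \<and> (u has_real_derivative w s * B s + u s * P s) (at s) \<and> w s \<noteq> 0"
    and A: "(A \<longlongrightarrow> a) at_top" and B: "(B \<longlongrightarrow> e) at_top" and P: "(P \<longlongrightarrow> b) at_top"
    and "b < a"
  shows "((\<lambda>s. u s / w s) \<longlongrightarrow> e / (a - b)) at_top"
proof -
  \<comment> \<open>the limiting equilibrium of the affine equation r' = (P - A) r + B satisfied by u / w\<close>
  define r where "r = e / (a - b)"
  define \<beta> where "\<beta> s = P s - A s" for s
  define \<delta> where "\<delta> s = B s + r * \<beta> s" for s
  have \<beta>: "(\<beta> \<longlongrightarrow> b - a) at_top" unfolding \<beta>_def using A P by (intro tendsto_intros)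
  moreover have "b - a < - ((a - b) / 2)" using \<open>b < a\<close> by (simp add: field_simps)
  ultimately have "\<forall>\<^sub>F s in at_top. \<beta> s < - ((a - b) / 2)" by (rule order_tendstoD(2))
  with deriv have \<rho>: "\<forall>\<^sub>F s in at_top. ((\<lambda>s. u s / w s - r) has_real_derivative
      \<beta> s * (u s / w s - r) + \<delta> s) (at s) \<and> \<beta> s \<le> - ((a - b) / 2)"
  proof eventually_elim
    case (elim s)
    then have "((\<lambda>s. u s / w s - r) has_real_derivative
        ((w s * B s + u s * P s) * w s - u s * (w s * A s)) / (w s * w s) - 0) (at s)"
      by (intro DERIV_diff DERIV_divide DERIV_const) auto
    moreover have "((w s * B s + u s * P s) * w s - u s * (w s * A s)) / (w s * w s) - 0
        = \<beta> s * (u s / w s - r) + \<delta> s"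
      using elim by (simp add: \<beta>_def \<delta>_def field_simps)
    ultimately show ?case using elim by simp
  qed
  have "(\<delta> \<longlongrightarrow> e + r * (b - a)) at_top" unfolding \<delta>_def using B \<beta> by (intro tendsto_intros)
  moreover have "e + r * (b - a) = 0" using \<open>b < a\<close> by (simp add: r_def field_simps)
  ultimately have \<delta>: "(\<delta> \<longlongrightarrow> 0) at_top" by simp
  have "0 < (a - b) / 2" using \<open>b < a\<close> by simp
  from this \<rho> \<delta> have "((\<lambda>s. u s / w s - r) \<longlongrightarrow> 0) at_top"
    by (rule tendsto_zero_of_DERIV_stable_affine)
  then show ?thesis unfolding r_def by (rule LIM_zero_cancel)
qed

section \<open>Solving an autonomous scalar equation through its time function\<close>

lemma autonomous_ODE_solution_tendsto:
  fixes f \<Phi> :: "real \<Rightarrow> real"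
  assumes \<Phi>_deriv: "\<And>x. D < x \<Longrightarrow> (\<Phi> has_real_derivative inverse (f x)) (at x)"
    and f_neg: "\<And>x. D < x \<Longrightarrow> f x < 0"
    and \<Phi>_lim: "filterlim \<Phi> at_top (at_right D)"
  shows "\<exists>U. (\<forall>\<^sub>F s in at_top. D < U s \<and> (U has_real_derivative f (U s)) (at s))
             \<and> (U \<longlongrightarrow> D) at_top"
proof -
  have \<Phi>_cont: "isCont \<Phi> x" if "D < x" for x
    using \<Phi>_deriv[OF that] by (rule DERIV_isCont)
  have \<Phi>_decr: "\<Phi> y < \<Phi> x" if "D < x" "x < y" for x y
  proof (rule DERIV_neg_imp_decreasing[OF \<open>x < y\<close>])
    fix z assume "x \<le> z" "z \<le> y"
    with that have "D < z" by simp
    then show "\<exists>l. (\<Phi> has_real_derivative l) (at z) \<and> l < 0"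
      using \<Phi>_deriv f_neg by (intro exI[of _ "inverse (f z)"]) simp
  qed
  have inj: "inj_on \<Phi> {D<..}"
    by (rule inj_onI) (metis \<Phi>_decr greaterThan_iff less_irrefl linorder_neqE_linordered_idom)
  define S0 where "S0 = \<Phi> (D + 1)"
  have onto: "s \<in> \<Phi> ` {D<..}" if s: "S0 \<le> s" for s
  proof -
    have "\<forall>\<^sub>F x in at_right D. s \<le> \<Phi> x" using \<Phi>_lim by (simp add: filterlim_at_top)
    moreover have "\<forall>\<^sub>F x in at_right D. x < D + 1"
      unfolding eventually_at_right_field by (intro exI[of _ "D + 1"]) auto
    moreover have "\<forall>\<^sub>F x in at_right D. D < x" by (rule eventually_at_right_less)
    ultimately have "\<forall>\<^sub>F x in at_right D. s \<le> \<Phi> x \<and> x < D + 1 \<and> D < x"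
      by eventually_elim blast
    then obtain x1 where x1: "s \<le> \<Phi> x1" "x1 < D + 1" "D < x1"
      using eventually_happens'[OF trivial_limit_at_right_real] by blast
    then obtain x where "x1 \<le> x" "\<Phi> x = s"
      using IVT2[of \<Phi> "D + 1" s x1] s \<Phi>_cont unfolding S0_def by force
    with x1 show ?thesis by force
  qed
  define U where "U = inv_into {D<..} \<Phi>"
  have U: "D < U s" "\<Phi> (U s) = s" if "S0 \<le> s" for s
    using inv_into_into[OF onto[OF that]] f_inv_into_f[OF onto[OF that]] unfolding U_def by auto
  have U_\<Phi>: "U (\<Phi> x) = x" if "D < x" for x
    using inj that unfolding U_def by simp
  have U_deriv: "(U has_real_derivative f (U s)) (at s)" if s: "S0 < s" for s
  proof -
    have Us: "D < U s" "\<Phi> (U s) = s" using U[of s] s by auto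
    obtain d where "0 < d" "d < U s - D" using Us dense[of 0 "U s - D"] by auto
    have near: "D < z" if "\<bar>z - U s\<bar> \<le> d" for z
      using that \<open>d < U s - D\<close> abs_ge_minus_self[of "z - U s"] by linarith
    have "isCont U (\<Phi> (U s))"
      by (rule isCont_inverse_function[where f = \<Phi> and g = U, OF \<open>0 < d\<close>])
        (simp_all add: near U_\<Phi> \<Phi>_cont)
    with Us have "isCont U s" by simp
    have "(U has_real_derivative inverse (inverse (f (U s)))) (at s)"
    proof (rule DERIV_inverse_function[where f = \<Phi> and a = S0 and b = "s + 1"])
      show "(\<Phi> has_real_derivative inverse (f (U s))) (at (U s))" using \<Phi>_deriv Us by simp
      show "inverse (f (U s)) \<noteq> 0" using f_neg Us by (simp add: less_imp_neq)
      show "\<Phi> (U y) = y" if "S0 < y" "y < s + 1" for y using U that by simp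
    qed (use s \<open>isCont U s\<close> in auto)
    then show ?thesis by simp
  qed
  have "(U \<longlongrightarrow> D) at_top"
  proof (rule order_tendstoI)
    fix a assume "a < D"
    show "\<forall>\<^sub>F s in at_top. a < U s"
      using eventually_ge_at_top[of S0] by eventually_elim (use U \<open>a < D\<close> in force)
  next
    fix a assume "D < a"
    show "\<forall>\<^sub>F s in at_top. U s < a"
      using eventually_gt_at_top[of "max S0 (\<Phi> a)"]
    proof eventually_elim
      case (elim s)
      show ?case
      proof (rule ccontr)
        assume "\<not> U s < a"
        then have "\<Phi> (U s) \<le> \<Phi> a" using \<Phi>_decr[of a "U s"] \<open>D < a\<close> by force
        with U[of s] elim show False by simp
      qed
    qed
  qed
  moreover have "\<forall>\<^sub>F s in at_top. D < U s \<and> (U has_real_derivative f (U s)) (at s)"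
    using eventually_gt_at_top[of S0] by eventually_elim (use U U_deriv in auto)
  ultimately show ?thesis by blast
qed

lemma lagrange_basis_sum_eq_one:
  fixes V D x :: real
  assumes "V \<noteq> 0" "D \<noteq> 0" "V \<noteq> D"
  shows "(x - V) * (x - D) / (V * D) + x * (x - D) / (V * (V - D)) + x * (x - V) / (D * (D - V)) = 1"
proof -
  have "V - D \<noteq> 0" "D - V \<noteq> 0" using assms by auto
  with assms show ?thesis by (simp add: field_simps) algebra
qed

(* An antiderivative of 1 / ((c - 1) x (x - V) (x - D)) on x > D, by partial fractions. *)
definition travel_time :: "real \<Rightarrow> real \<Rightarrow> real \<Rightarrow> real \<Rightarrow> real" where
  "travel_time c V D x =
     (ln x / (V * D) + ln (x - V) / (V * (V - D)) + ln (x - D) / (D * (D - V))) / (c - 1)"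

lemma travel_time_has_real_derivative:
  assumes "0 < V" "V < D" "D < x" "c \<noteq> 1"
  shows "(travel_time c V D has_real_derivative inverse ((c - 1) * x * (x - V) * (x - D))) (at x)"
proof -
  have "(travel_time c V D has_real_derivative
      (1 / x / (V * D) + 1 / (x - V) / (V * (V - D)) + 1 / (x - D) / (D * (D - V))) / (c - 1)) (at x)"
    unfolding travel_time_def[abs_def] using assms by (auto intro!: derivative_eq_intros)
  also have "1 / x / (V * D) + 1 / (x - V) / (V * (V - D)) + 1 / (x - D) / (D * (D - V))
      = ((x - V) * (x - D) / (V * D) + x * (x - D) / (V * (V - D)) + x * (x - V) / (D * (D - V)))
        / (x * (x - V) * (x - D))"
    using assms by (simp add: add_divide_distrib mult_ac)
  also have "\<dots> = 1 / (x * (x - V) * (x - D))" using assms by (simp add: lagrange_basis_sum_eq_one)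
  finally show ?thesis by (simp add: inverse_eq_divide mult_ac)
qed

lemma travel_time_tendsto_at_right:
  assumes "c < 1" "0 < V" "V < D"
  shows "filterlim (travel_time c V D) at_top (at_right D)"
proof -
  define k where "k = 1 / (D * (D - V) * (1 - c))"
  have "0 < k" using assms by (simp add: k_def)
  have "filterlim (\<lambda>x. ln (x - D)) at_bot (at_right D)" by real_asymp
  then have "filterlim (\<lambda>x. k * - ln (x - D)) at_top (at_right D)"
    using \<open>0 < k\<close> by (intro filterlim_tendsto_pos_mult_at_top[OF tendsto_const])
      (auto simp: filterlim_uminus_at_top)
  moreover have "((\<lambda>x. (ln x / (V * D) + ln (x - V) / (V * (V - D))) / (c - 1))
      \<longlongrightarrow> (ln D / (V * D) + ln (D - V) / (V * (V - D))) / (c - 1)) (at_right D)"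
    using assms by (intro tendsto_intros) auto
  ultimately have "filterlim (\<lambda>x. (ln x / (V * D) + ln (x - V) / (V * (V - D))) / (c - 1)
      + k * - ln (x - D)) at_top (at_right D)"
    by (rule filterlim_tendsto_add_at_top[rotated])
  moreover have "(ln x / (V * D) + ln (x - V) / (V * (V - D))) / (c - 1) + k * - ln (x - D)
      = travel_time c V D x" for x
  proof -
    have "k * - ln (x - D) = ln (x - D) / (D * (D - V)) / (c - 1)"
      using assms by (simp add: k_def divide_simps algebra_simps)
    then show ?thesis unfolding travel_time_def by (simp add: add_divide_distrib)
  qed
  ultimately show ?thesis by simp
qed

section \<open>The system in coordinates adapted to the special solution\<close>

definition special_coeff :: "real \<Rightarrow> real" where
  "special_coeff \<gamma> = (\<gamma> - 1)^2 / 4"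

definition U_root :: "real \<Rightarrow> real \<Rightarrow> real" where
  "U_root \<gamma> \<mu> = 2 * \<mu> / (\<gamma> + 1)"

definition rate_w :: "real \<Rightarrow> real \<Rightarrow> real \<Rightarrow> real \<Rightarrow> real" where
  "rate_w \<gamma> \<mu> w U = 2 * w + 2 * ((special_coeff \<gamma> - 1) * U^2 + (1 + \<mu>) * U - \<mu>)"

definition rate_u :: "real \<Rightarrow> real \<Rightarrow> real \<Rightarrow> real" where
  "rate_u \<gamma> \<mu> U = (special_coeff \<gamma> - 1) * U * (U - U_root \<gamma> \<mu>)"

lemma Ffun_minus_special_Gfun:
  assumes "\<gamma> \<noteq> 1"
  shows "Ffun \<gamma> \<mu> H U - 2 * special_coeff \<gamma> * U * Gfun \<gamma> \<mu> H U
       = (H - special_coeff \<gamma> * U^2) * rate_w \<gamma> \<mu> (H - special_coeff \<gamma> * U^2) U"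
proof -
  have "k1 \<gamma> \<mu> = special_coeff \<gamma> * k2 \<gamma> \<mu> + 1 + \<mu>"
    using assms unfolding special_coeff_def k1_def k2_def by (simp add: field_simps power2_eq_square)
  then show ?thesis unfolding Ffun_def Gfun_def rate_w_def
    by (simp add: algebra_simps power2_eq_square power3_eq_cube)
qed

lemma Gfun_decomposition:
  assumes "1 < \<gamma>" "\<gamma> < 3"
  shows "Gfun \<gamma> \<mu> H U = (H - special_coeff \<gamma> * U^2) * (U + k2 \<gamma> \<mu>) + rate_u \<gamma> \<mu> U * (U - U_D \<gamma>)"
proof -
  have "k2 \<gamma> \<mu> * (\<gamma> - 1) = 2 * (1 - \<mu>)" "U_D \<gamma> * (3 - \<gamma>) = 2" "U_root \<gamma> \<mu> * (\<gamma> + 1) = 2 * \<mu>"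
    using assms unfolding k2_def U_D_def U_root_def by (auto simp: field_simps)
  moreover have "special_coeff \<gamma> * 4 = (\<gamma> - 1)^2" unfolding special_coeff_def by simp
  ultimately show ?thesis unfolding Gfun_def rate_u_def by algebra
qed

lemma H_D_eq: "\<gamma> \<noteq> 3 \<Longrightarrow> H_D \<gamma> = special_coeff \<gamma> * (U_D \<gamma>)^2"
  unfolding H_D_def special_coeff_def U_D_def by (simp add: power_divide)

lemma C1_eq: "\<gamma> \<noteq> 3 \<Longrightarrow> C1 \<gamma> = 2 * special_coeff \<gamma> * U_D \<gamma>"
  unfolding C1_def special_coeff_def U_D_def by (simp add: field_simps)

lemma U_D_mult_eq: "\<gamma> \<noteq> 3 \<Longrightarrow> U_D \<gamma> * (3 - \<gamma>) = 2"
  unfolding U_D_def by (simp add: field_simps)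

lemma rate_w_at_D:
  assumes "\<gamma> \<noteq> 3"
  shows "rate_w \<gamma> \<mu> 0 (U_D \<gamma>) = -2 * (\<gamma> - 1) * (1 - \<mu>) / (3 - \<gamma>)"
proof -
  have "special_coeff \<gamma> * 4 = (\<gamma> - 1)^2" unfolding special_coeff_def by simp
  then have "rate_w \<gamma> \<mu> 0 (U_D \<gamma>) * (3 - \<gamma>) = -2 * (\<gamma> - 1) * (1 - \<mu>)"
    unfolding rate_w_def using U_D_mult_eq[OF assms] by algebra
  then show ?thesis using assms by (simp add: eq_divide_eq)
qed

lemma rate_u_at_D:
  assumes "1 < \<gamma>" "\<gamma> < 3"
  shows "rate_u \<gamma> \<mu> (U_D \<gamma>) = ((3 - \<gamma>) * (1 + \<mu>) - 4) / (3 - \<gamma>)"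
proof -
  have "special_coeff \<gamma> * 4 = (\<gamma> - 1)^2" unfolding special_coeff_def by simp
  moreover have "U_root \<gamma> \<mu> * (\<gamma> + 1) = 2 * \<mu>" unfolding U_root_def using assms by simp
  moreover have "U_D \<gamma> * (3 - \<gamma>) = 2" using assms by (intro U_D_mult_eq) simp
  ultimately have "rate_u \<gamma> \<mu> (U_D \<gamma>) * (3 - \<gamma>) = (3 - \<gamma>) * (1 + \<mu>) - 4"
    unfolding rate_u_def by algebra
  then show ?thesis using assms by (simp add: eq_divide_eq)
qed

lemma U_D_plus_k2: "\<gamma> \<noteq> 1 \<Longrightarrow> \<gamma> \<noteq> 3 \<Longrightarrow> U_D \<gamma> + k2 \<gamma> \<mu> = 2 * ((\<gamma> - 3) * \<mu> + 2) / ((3 - \<gamma>) * (\<gamma> - 1))"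
  unfolding k2_def U_D_def by (simp add: field_simps)

lemma C2_denominator_pos:
  fixes \<gamma> \<mu> :: real
  assumes "1 < \<gamma>" "\<gamma> < 3" "\<mu> < 1"
  shows "0 < (\<gamma> - 3) * \<mu> + 2"
proof -
  have "(3 - \<gamma>) * \<mu> < (3 - \<gamma>) * 1" using assms by (intro mult_strict_left_mono) auto
  then show ?thesis using assms by (simp add: algebra_simps)
qed

lemma U_D_plus_k2_pos: "1 < \<gamma> \<Longrightarrow> \<gamma> < 3 \<Longrightarrow> \<mu> < 1 \<Longrightarrow> 0 < U_D \<gamma> + k2 \<gamma> \<mu>"
  using C2_denominator_pos[of \<gamma> \<mu>] by (simp add: U_D_plus_k2)

lemma rate_w_at_D_neg: "1 < \<gamma> \<Longrightarrow> \<gamma> < 3 \<Longrightarrow> \<mu> < 1 \<Longrightarrow> rate_w \<gamma> \<mu> 0 (U_D \<gamma>) < 0"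
  by (simp add: rate_w_at_D divide_neg_pos mult_neg_pos)

lemma rate_u_less_rate_w_at_D:
  assumes "1 < \<gamma>" "\<gamma> < 3" "0 < \<mu>" "\<mu> < 1"
  shows "rate_u \<gamma> \<mu> (U_D \<gamma>) < rate_w \<gamma> \<mu> 0 (U_D \<gamma>)"
proof -
  have "\<mu> * (5 - 3 * \<gamma>) < 3 - \<gamma>"
  proof (cases "5 - 3 * \<gamma> \<le> 0")
    case True
    then show ?thesis using assms mult_nonneg_nonpos[of \<mu> "5 - 3 * \<gamma>"] by linarith
  next
    case False
    then have "\<mu> * (5 - 3 * \<gamma>) < 1 * (5 - 3 * \<gamma>)"
      using assms by (intro mult_strict_right_mono) auto
    also have "\<dots> < 3 - \<gamma>" using assms by simp
    finally show ?thesis .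
  qed
  then have "(3 - \<gamma>) * (1 + \<mu>) - 4 < -2 * (\<gamma> - 1) * (1 - \<mu>)"
    by (simp add: algebra_simps)
  then show ?thesis using assms
    by (simp add: rate_w_at_D rate_u_at_D divide_strict_right_mono)
qed

lemma C2_eq:
  assumes "1 < \<gamma>" "\<gamma> < 3" "\<mu> < 1"
  shows "C2 \<gamma> \<mu> = C1 \<gamma> + (rate_w \<gamma> \<mu> 0 (U_D \<gamma>) - rate_u \<gamma> \<mu> (U_D \<gamma>)) / (U_D \<gamma> + k2 \<gamma> \<mu>)"
proof -
  define N where "N = (\<gamma> - 3) * \<mu> + 2"
  define X where "X = -2 * (\<gamma> - 1) * (1 - \<mu>) - ((3 - \<gamma>) * (1 + \<mu>) - 4)"
  have nz: "N \<noteq> 0" "3 - \<gamma> \<noteq> 0" "\<gamma> - 1 \<noteq> 0"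
    using C2_denominator_pos[OF assms] assms unfolding N_def by auto
  have "rate_w \<gamma> \<mu> 0 (U_D \<gamma>) - rate_u \<gamma> \<mu> (U_D \<gamma>) = X / (3 - \<gamma>)"
    using assms by (simp add: rate_w_at_D rate_u_at_D X_def diff_divide_distrib)
  moreover have "X / (3 - \<gamma>) / (2 * N / ((3 - \<gamma>) * (\<gamma> - 1))) = X * (\<gamma> - 1) / (2 * N)"
    using nz by (simp add: field_simps)
  ultimately have "(rate_w \<gamma> \<mu> 0 (U_D \<gamma>) - rate_u \<gamma> \<mu> (U_D \<gamma>)) / (U_D \<gamma> + k2 \<gamma> \<mu>)
      = X * (\<gamma> - 1) / (2 * N)"
    using assms by (simp add: U_D_plus_k2 N_def)
  moreover have "C1 \<gamma> + X * (\<gamma> - 1) / (2 * N)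
      = (X * (\<gamma> - 1) * (3 - \<gamma>) + 2 * N * (\<gamma> - 1)^2) / (2 * N * (3 - \<gamma>))"
    unfolding C1_def using nz by (simp add: field_simps)
  moreover have "\<dots> = C2 \<gamma> \<mu>"
    unfolding C2_def X_def N_def
    by (rule arg_cong2[where f = "(/)"]) (simp_all add: algebra_simps power2_eq_square)
  ultimately show ?thesis by simp
qed

section \<open>Integral curves through D\<close>

lemma integral_curve_to_D_normal_form:
  assumes "1 < \<gamma>" "\<gamma> < 3" and curve: "integral_curve_to_D \<gamma> \<mu> H U L"
    and w_def: "w = (\<lambda>s. H s - special_coeff \<gamma> * (U s)^2)"
    and u_def: "u = (\<lambda>s. U s - U_D \<gamma>)"
  shows "\<forall>\<^sub>F s in L. (w has_real_derivative w s * rate_w \<gamma> \<mu> (w s) (U s)) (at s)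
            \<and> (u has_real_derivative w s * (U s + k2 \<gamma> \<mu>) + u s * rate_u \<gamma> \<mu> (U s)) (at s)
            \<and> (w s \<noteq> 0 \<or> u s \<noteq> 0)"
    and "(w \<longlongrightarrow> 0) L" and "(U \<longlongrightarrow> U_D \<gamma>) L"
    and "((\<lambda>s. rate_w \<gamma> \<mu> (w s) (U s)) \<longlongrightarrow> rate_w \<gamma> \<mu> 0 (U_D \<gamma>)) L"
    and "((\<lambda>s. rate_u \<gamma> \<mu> (U s)) \<longlongrightarrow> rate_u \<gamma> \<mu> (U_D \<gamma>)) L"
    and "(u \<longlongrightarrow> 0) L"
proof -
  have H_D: "H_D \<gamma> = special_coeff \<gamma> * (U_D \<gamma>)^2" using assms by (simp add: H_D_eq)
  have ode: "\<forall>\<^sub>F s in L. (H has_real_derivative Ffun \<gamma> \<mu> (H s) (U s)) (at s)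
      \<and> (U has_real_derivative Gfun \<gamma> \<mu> (H s) (U s)) (at s) \<and> (H s, U s) \<noteq> (H_D \<gamma>, U_D \<gamma>)"
    and H: "(H \<longlongrightarrow> H_D \<gamma>) L" and U: "(U \<longlongrightarrow> U_D \<gamma>) L"
    using curve unfolding integral_curve_to_D_def by auto
  from ode show "\<forall>\<^sub>F s in L. (w has_real_derivative w s * rate_w \<gamma> \<mu> (w s) (U s)) (at s)
            \<and> (u has_real_derivative w s * (U s + k2 \<gamma> \<mu>) + u s * rate_u \<gamma> \<mu> (U s)) (at s)
            \<and> (w s \<noteq> 0 \<or> u s \<noteq> 0)"
  proof eventually_elim
    case (elim s)
    have "w s * rate_w \<gamma> \<mu> (w s) (U s)
        = Ffun \<gamma> \<mu> (H s) (U s) - 2 * special_coeff \<gamma> * U s * Gfun \<gamma> \<mu> (H s) (U s)"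
      using assms(1) by (simp add: w_def Ffun_minus_special_Gfun)
    with elim have "(w has_real_derivative w s * rate_w \<gamma> \<mu> (w s) (U s)) (at s)"
      unfolding w_def by (auto intro!: derivative_eq_intros)
    moreover have "w s * (U s + k2 \<gamma> \<mu>) + u s * rate_u \<gamma> \<mu> (U s) = Gfun \<gamma> \<mu> (H s) (U s)"
      using assms(1,2) by (simp add: w_def u_def Gfun_decomposition mult.commute)
    with elim have "(u has_real_derivative w s * (U s + k2 \<gamma> \<mu>) + u s * rate_u \<gamma> \<mu> (U s)) (at s)"
      unfolding u_def by (auto intro!: derivative_eq_intros)
    moreover from elim have "w s \<noteq> 0 \<or> u s \<noteq> 0" unfolding w_def u_def H_D by auto
    ultimately show ?case by blast
  qed
  have "(w \<longlongrightarrow> H_D \<gamma> - special_coeff \<gamma> * (U_D \<gamma>)^2) L"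
    unfolding w_def using H U by (intro tendsto_intros)
  then show w: "(w \<longlongrightarrow> 0) L" by (simp add: H_D)
  show "(U \<longlongrightarrow> U_D \<gamma>) L" by (fact U)
  show "((\<lambda>s. rate_w \<gamma> \<mu> (w s) (U s)) \<longlongrightarrow> rate_w \<gamma> \<mu> 0 (U_D \<gamma>)) L"
    unfolding rate_w_def using w U by (intro tendsto_intros)
  show "((\<lambda>s. rate_u \<gamma> \<mu> (U s)) \<longlongrightarrow> rate_u \<gamma> \<mu> (U_D \<gamma>)) L"
    unfolding rate_u_def using U by (intro tendsto_intros)
  show "(u \<longlongrightarrow> 0) L"
    unfolding u_def using tendsto_diff[OF U tendsto_const[of "U_D \<gamma>"]] by simp
qed

lemma not_integral_curve_to_D_at_bot:
  assumes "1 < \<gamma>" "\<gamma> < 3" "0 < \<mu>" "\<mu> < 1"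
  shows "\<not> integral_curve_to_D \<gamma> \<mu> H U at_bot"
proof
  assume curve: "integral_curve_to_D \<gamma> \<mu> H U at_bot"
  define w where "w = (\<lambda>s. H s - special_coeff \<gamma> * (U s)^2)"
  define u where "u = (\<lambda>s. U s - U_D \<gamma>)"
  note nf = integral_curve_to_D_normal_form[OF assms(1,2) curve w_def u_def]
  have "rate_u \<gamma> \<mu> (U_D \<gamma>) < 0" "rate_w \<gamma> \<mu> 0 (U_D \<gamma>) < 0"
    using rate_u_less_rate_w_at_D[OF assms] rate_w_at_D_neg[of \<gamma> \<mu>] assms by auto
  with nf(4,5) have "\<forall>\<^sub>F s in at_bot. rate_w \<gamma> \<mu> (w s) (U s) < 0 \<and> rate_u \<gamma> \<mu> (U s) < 0"
    by (auto intro: eventually_conj order_tendstoD(2))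
  with nf(1) have "\<forall>\<^sub>F s in at_bot. (w has_real_derivative w s * rate_w \<gamma> \<mu> (w s) (U s)) (at s)
      \<and> (u has_real_derivative w s * (U s + k2 \<gamma> \<mu>) + u s * rate_u \<gamma> \<mu> (U s)) (at s)
      \<and> rate_w \<gamma> \<mu> (w s) (U s) \<le> 0 \<and> rate_u \<gamma> \<mu> (U s) \<le> 0"
    by eventually_elim auto
  then have "\<forall>\<^sub>F s in at_bot. w s = 0 \<and> u s = 0"
    using nf(2,6) by (rule triangular_system_zero_if_tendsto_zero_at_bot)
  with nf(1) have "\<forall>\<^sub>F s in at_bot. (w s \<noteq> 0 \<or> u s \<noteq> 0) \<and> w s = 0 \<and> u s = 0"
    by eventually_elim blast
  then obtain s where "(w s \<noteq> 0 \<or> u s \<noteq> 0) \<and> w s = 0 \<and> u s = 0"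
    using eventually_happens'[OF trivial_limit_at_bot_linorder] by blast
  then show False by blast
qed

lemma secant_slope_eq:
  assumes "\<gamma> \<noteq> 3" "U \<noteq> U_D \<gamma>"
  shows "(H - H_D \<gamma>) / (U - U_D \<gamma>)
       = (H - special_coeff \<gamma> * U^2) / (U - U_D \<gamma>) + special_coeff \<gamma> * (U + U_D \<gamma>)"
  using assms by (simp add: H_D_eq field_simps power2_eq_square)

lemma slope_at_D_C1_if_on_special_solution:
  assumes "1 < \<gamma>" "\<gamma> < 3"
    and curve: "integral_curve_to_D \<gamma> \<mu> H U L" and special: "on_special_solution \<gamma> H U L"
  shows "slope_at_D \<gamma> H U L (C1 \<gamma>)"
proof -
  define w where "w = (\<lambda>s. H s - special_coeff \<gamma> * (U s)^2)"
  define u where "u = (\<lambda>s. U s - U_D \<gamma>)"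
  note nf = integral_curve_to_D_normal_form[OF assms(1,2) curve w_def u_def]
  have "\<forall>\<^sub>F s in L. w s = 0"
    using special unfolding on_special_solution_def w_def special_coeff_def by simp
  with nf(1) have "\<forall>\<^sub>F s in L. special_coeff \<gamma> * (U s + U_D \<gamma>) = (H s - H_D \<gamma>) / (U s - U_D \<gamma>)"
    by eventually_elim (use assms in \<open>auto simp: secant_slope_eq w_def u_def\<close>)
  moreover have "((\<lambda>s. special_coeff \<gamma> * (U s + U_D \<gamma>))
      \<longlongrightarrow> special_coeff \<gamma> * (U_D \<gamma> + U_D \<gamma>)) L"
    using nf(3) by (intro tendsto_intros)
  moreover have "special_coeff \<gamma> * (U_D \<gamma> + U_D \<gamma>) = C1 \<gamma>" using assms by (simp add: C1_eq)
  ultimately show ?thesis unfolding slope_at_D_def by (auto intro: Lim_transform_eventually)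
qed

lemma slope_at_D_C2_if_not_on_special_solution:
  assumes "1 < \<gamma>" "\<gamma> < 3" "0 < \<mu>" "\<mu> < 1"
    and curve: "integral_curve_to_D \<gamma> \<mu> H U at_top"
    and not_special: "\<not> on_special_solution \<gamma> H U at_top"
  shows "slope_at_D \<gamma> H U at_top (C2 \<gamma> \<mu>)"
proof -
  define w where "w = (\<lambda>s. H s - special_coeff \<gamma> * (U s)^2)"
  define u where "u = (\<lambda>s. U s - U_D \<gamma>)"
  define a where "a = rate_w \<gamma> \<mu> 0 (U_D \<gamma>)"
  define b where "b = rate_u \<gamma> \<mu> (U_D \<gamma>)"
  define e where "e = U_D \<gamma> + k2 \<gamma> \<mu>"
  note nf = integral_curve_to_D_normal_form[OF assms(1,2) curve w_def u_def]
  have "b < a" "a < 0" "0 < e"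
    using rate_u_less_rate_w_at_D[OF assms(1-4)] rate_w_at_D_neg[of \<gamma> \<mu>] U_D_plus_k2_pos[of \<gamma> \<mu>]
      assms unfolding a_def b_def e_def by auto
  have "\<forall>\<^sub>F s in at_top. rate_w \<gamma> \<mu> (w s) (U s) < 0"
    using nf(4) \<open>a < 0\<close> unfolding a_def by (rule order_tendstoD(2))
  with nf(1) have "\<forall>\<^sub>F s in at_top. (w has_real_derivative w s * rate_w \<gamma> \<mu> (w s) (U s)) (at s)
      \<and> rate_w \<gamma> \<mu> (w s) (U s) \<le> 0"
    by eventually_elim auto
  moreover have "\<not> (\<forall>\<^sub>F s in at_top. w s = 0)"
    using not_special unfolding on_special_solution_def w_def special_coeff_def by simp
  ultimately have "\<forall>\<^sub>F s in at_top. w s \<noteq> 0"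
    using eventually_zero_or_nonzero_of_DERIV_mult_nonpos[of w "\<lambda>s. rate_w \<gamma> \<mu> (w s) (U s)"]
    by blast
  with nf(1) have "\<forall>\<^sub>F s in at_top. (w has_real_derivative w s * rate_w \<gamma> \<mu> (w s) (U s)) (at s)
      \<and> (u has_real_derivative w s * (U s + k2 \<gamma> \<mu>) + u s * rate_u \<gamma> \<mu> (U s)) (at s) \<and> w s \<noteq> 0"
    by eventually_elim auto
  moreover have "((\<lambda>s. U s + k2 \<gamma> \<mu>) \<longlongrightarrow> e) at_top"
    unfolding e_def using nf(3) by (intro tendsto_intros)
  ultimately have ratio: "((\<lambda>s. u s / w s) \<longlongrightarrow> e / (a - b)) at_top"
    using nf(4,5) \<open>b < a\<close> unfolding a_def b_def by (intro ratio_tendsto_of_triangular_system)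
  have "0 < e / (a - b)" using \<open>b < a\<close> \<open>0 < e\<close> by simp
  with ratio have "\<forall>\<^sub>F s in at_top. 0 < u s / w s" by (rule order_tendstoD(1))
  then have "\<forall>\<^sub>F s in at_top.
      inverse (u s / w s) + special_coeff \<gamma> * (U s + U_D \<gamma>) = (H s - H_D \<gamma>) / (U s - U_D \<gamma>)"
  proof eventually_elim
    case (elim s)
    then have "U s \<noteq> U_D \<gamma>" by (auto simp: u_def)
    then show ?case using assms by (simp add: secant_slope_eq w_def u_def)
  qed
  moreover have "((\<lambda>s. inverse (u s / w s) + special_coeff \<gamma> * (U s + U_D \<gamma>))
      \<longlongrightarrow> inverse (e / (a - b)) + special_coeff \<gamma> * (U_D \<gamma> + U_D \<gamma>)) at_top"
    using ratio nf(3) \<open>0 < e / (a - b)\<close>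
    by (intro tendsto_add tendsto_inverse tendsto_mult tendsto_const) auto
  moreover have "inverse (e / (a - b)) + special_coeff \<gamma> * (U_D \<gamma> + U_D \<gamma>) = C2 \<gamma> \<mu>"
    using assms by (simp add: C2_eq C1_eq a_def b_def e_def)
  ultimately show ?thesis unfolding slope_at_D_def by (auto intro: Lim_transform_eventually)
qed

lemma C1_neq_C2:
  assumes "1 < \<gamma>" "\<gamma> < 3" "0 < \<mu>" "\<mu> < 1"
  shows "C1 \<gamma> \<noteq> C2 \<gamma> \<mu>"
  using rate_u_less_rate_w_at_D[OF assms] U_D_plus_k2_pos[of \<gamma> \<mu>] assms
  by (simp add: C2_eq)

lemma slope_at_D_C1_iff_on_special_solution:
  assumes "1 < \<gamma>" "\<gamma> < 3" "0 < \<mu>" "\<mu> < 1"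
    and curve: "integral_curve_to_D \<gamma> \<mu> H U at_top"
  shows "slope_at_D \<gamma> H U at_top (C1 \<gamma>) \<longleftrightarrow> on_special_solution \<gamma> H U at_top"
proof
  assume C1: "slope_at_D \<gamma> H U at_top (C1 \<gamma>)"
  show "on_special_solution \<gamma> H U at_top"
  proof (rule ccontr)
    assume "\<not> on_special_solution \<gamma> H U at_top"
    with assms have "slope_at_D \<gamma> H U at_top (C2 \<gamma> \<mu>)"
      by (intro slope_at_D_C2_if_not_on_special_solution)
    with C1 have "C1 \<gamma> = C2 \<gamma> \<mu>"
      unfolding slope_at_D_def by (rule tendsto_unique[OF trivial_limit_at_top_linorder])
    with C1_neq_C2[OF assms(1-4)] show False ..
  qed
qed (rule slope_at_D_C1_if_on_special_solution[OF assms(1,2) curve])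

lemma special_solution_exists:
  assumes "1 < \<gamma>" "\<gamma> < 3" "0 < \<mu>" "\<mu> < 1"
  shows "\<exists>H U. integral_curve_to_D \<gamma> \<mu> H U at_top \<and> on_special_solution \<gamma> H U at_top"
proof -
  define c where "c = special_coeff \<gamma>"
  define V where "V = U_root \<gamma> \<mu>"
  define D where "D = U_D \<gamma>"
  have "(\<gamma> - 1)^2 < 2^2" using assms by (intro power_strict_mono) auto
  then have "c < 1" by (simp add: c_def special_coeff_def)
  have "0 < V" "V < 1" "1 < D" using assms by (auto simp: V_def U_root_def D_def U_D_def)
  define f where "f x = rate_u \<gamma> \<mu> x * (x - D)" for x
  have f_neg: "f x < 0" if "D < x" for x
  proof -
    have "0 < x * (x - V) * (x - D)" using that \<open>V < 1\<close> \<open>1 < D\<close> by simp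
    then show ?thesis using \<open>c < 1\<close>
      by (simp add: f_def rate_u_def c_def V_def mult.assoc mult_neg_pos)
  qed
  have "(travel_time c V D has_real_derivative inverse (f x)) (at x)" if "D < x" for x
    using travel_time_has_real_derivative[of V D x c] that \<open>0 < V\<close> \<open>V < 1\<close> \<open>1 < D\<close> \<open>c < 1\<close>
    by (simp add: f_def rate_u_def c_def V_def mult.assoc)
  moreover have "filterlim (travel_time c V D) at_top (at_right D)"
    using travel_time_tendsto_at_right \<open>c < 1\<close> \<open>0 < V\<close> \<open>V < 1\<close> \<open>1 < D\<close> by simp
  ultimately obtain U where U: "\<forall>\<^sub>F s in at_top. D < U s \<and> (U has_real_derivative f (U s)) (at s)"
    and U_lim: "(U \<longlongrightarrow> D) at_top"
    using autonomous_ODE_solution_tendsto[of D "travel_time c V D" f] f_neg by blast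
  define H where "H s = c * (U s)^2" for s
  have G: "Gfun \<gamma> \<mu> (H s) (U s) = f (U s)" for s
    using assms by (simp add: Gfun_decomposition H_def c_def f_def D_def)
  have F: "Ffun \<gamma> \<mu> (H s) (U s) = 2 * c * U s * f (U s)" for s
    using Ffun_minus_special_Gfun[of \<gamma> \<mu> "H s" "U s"] G assms by (simp add: H_def c_def)
  have "\<forall>\<^sub>F s in at_top. (H has_real_derivative Ffun \<gamma> \<mu> (H s) (U s)) (at s)
      \<and> (U has_real_derivative Gfun \<gamma> \<mu> (H s) (U s)) (at s) \<and> (H s, U s) \<noteq> (H_D \<gamma>, U_D \<gamma>)"
    using U
  proof eventually_elim
    case (elim s)
    then have "(H has_real_derivative 2 * c * U s * f (U s)) (at s)"
      unfolding H_def[abs_def] by (auto intro!: derivative_eq_intros)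
    with elim show ?case by (simp add: F G D_def)
  qed
  moreover have "(H \<longlongrightarrow> H_D \<gamma>) at_top"
    unfolding H_def[abs_def] using tendsto_mult_left[OF tendsto_power[OF U_lim, of 2], of c] assms
    by (simp add: H_D_eq c_def D_def)
  moreover have "on_special_solution \<gamma> H U at_top"
    by (simp add: on_special_solution_def H_def c_def special_coeff_def)
  ultimately show ?thesis using U_lim unfolding integral_curve_to_D_def D_def by blast
qed

theorem lemma4p2:
  fixes \<gamma> \<mu> :: real
  assumes "1 < \<gamma>" "\<gamma> < 3" "0 < \<mu>" "\<mu> < 1"
  shows "(\<exists>H U L. L \<in> {at_top, at_bot} \<and> integral_curve_to_D \<gamma> \<mu> H U L
              \<and> on_special_solution \<gamma> H U L \<and> slope_at_D \<gamma> H U L (C1 \<gamma>))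
       \<and> (\<forall>H U L. L \<in> {at_top, at_bot} \<longrightarrow> integral_curve_to_D \<gamma> \<mu> H U L \<longrightarrow>
              (slope_at_D \<gamma> H U L (C1 \<gamma>) \<longleftrightarrow> on_special_solution \<gamma> H U L)
            \<and> (\<not> on_special_solution \<gamma> H U L \<longrightarrow> slope_at_D \<gamma> H U L (C2 \<gamma> \<mu>)))"
proof (intro conjI allI impI)
  obtain H U where "integral_curve_to_D \<gamma> \<mu> H U at_top" "on_special_solution \<gamma> H U at_top"
    using special_solution_exists[OF assms] by blast
  with slope_at_D_C1_iff_on_special_solution[OF assms]
  show "\<exists>H U L. L \<in> {at_top, at_bot} \<and> integral_curve_to_D \<gamma> \<mu> H U L
      \<and> on_special_solution \<gamma> H U L \<and> slope_at_D \<gamma> H U L (C1 \<gamma>)"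
    by blast
next
  fix H U and L :: "real filter"
  assume "L \<in> {at_top, at_bot}" and "integral_curve_to_D \<gamma> \<mu> H U L"
  with not_integral_curve_to_D_at_bot[OF assms]
  have "L = at_top" and curve: "integral_curve_to_D \<gamma> \<mu> H U at_top" by auto
  then show "slope_at_D \<gamma> H U L (C1 \<gamma>) \<longleftrightarrow> on_special_solution \<gamma> H U L"
    and "\<not> on_special_solution \<gamma> H U L \<Longrightarrow> slope_at_D \<gamma> H U L (C2 \<gamma> \<mu>)"
    using slope_at_D_C1_iff_on_special_solution[OF assms curve]
      slope_at_D_C2_if_not_on_special_solution[OF assms curve] by simp_all
qed

end
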